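(* Let $\varSigma$ be a $2k$-dimensional rational sphere on vertex set $[n]$ with vertex coordinates $v_i\in\mathbb{R}^{2k+1}$ forming a linear system of parameters, and suppose $\mathcal{A}^*(\varSigma)$ has the hard Lefschetz property. Then for every subcomplex $\varDelta$ of $\varSigma$ (with the restricted coordinates), $$\kappa_k(\varSigma,\varDelta)\ \le\ \kappa_{k+1}(\varSigma,\varDelta),$$ where $\kappa_i(\varSigma,\varDelta)=\dim\mathrm{coker}\big[\mathcal{A}_i(\varDelta)\to\mathcal{A}_i(\varSigma)\big]$.
   Context: A $2k$-dimensional rational sphere is a simplicial complex which is a rational homology manifold with the rational homology of $S^{2k}$. Let $d=2k+1$. For a simplicial complex $\varGamma$ on vertices from $[n]$ with coordinates $v_i=(v_{i,1},\dots,v_{i,d})\in\mathbb{R}^d$, let $\mathbb{R}[y_1,\dots,y_n]$ be a polynomial ring on which $x_i$ acts by $\partial/\partial y_i$. The stress space $\mathcal{A}_i(\varGamma)$ is the space of homogeneous degree-$i$ polynomials $p(y)$ such that $m(\partial/\partial y)p=0$ for every monomial $m(x)$ whose support is not a face of $\varGamma$, and $\sum_{r}v_{r,j}\,\partial p/\partial y_r=0$ for $j=1,\dots,d$. Since $\varDelta\subset\varSigma$, every stress of $\varDelta$ is a stress of $\varSigma$, giving the inclusion $\mathcal{A}_i(\varDelta)\to\mathcal{A}_i(\varSigma)$. $\mathcal{A}^*(\varSigma)=\mathbb{R}[\varSigma]/(\theta_1,\dots,\theta_d)$ with $\theta_j=\sum_iv_{i,j}x_i$ and $\mathbb{R}[\varSigma]$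 the face ring. The hard Lefschetz property means there is $\ell\in\mathcal{A}^1(\varSigma)$ with multiplication by $\ell^{d-2j}:\mathcal{A}^j(\varSigma)\to\mathcal{A}^{d-j}(\varSigma)$ an isomorphism for all $j\le d/2$. *)

theory Defs
  imports "HOL-Analysis.Analysis" "HOL-Library.Poly_Mapping" "HOL-Analysis.Finite_Function_Topology"
begin

definition simplicial_complex :: "nat \<Rightarrow> nat set set \<Rightarrow> bool" where
  "simplicial_complex n K \<longleftrightarrow> {} \<in> K \<and> (\<forall>\<sigma>\<in>K. \<sigma> \<subseteq> {1..n}) \<and>
     (\<forall>\<sigma>\<in>K. \<forall>\<tau>. \<tau> \<subseteq> \<sigma> \<longrightarrow> \<tau> \<in> K)"

definition link :: "nat set set \<Rightarrow> nat set \<Rightarrow> nat set set" where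
  "link K \<sigma> = {\<tau> \<in> K. \<tau> \<inter> \<sigma> = {} \<and> \<tau> \<union> \<sigma> \<in> K}"

text \<open>Chains supported on faces with exactly m vertices (simplicial degree m - 1;
  m = 0 is the augmentation degree -1).\<close>
definition chains :: "nat set set \<Rightarrow> nat \<Rightarrow> (nat set \<Rightarrow>\<^sub>0 real) set" where
  "chains K m = {c. \<forall>\<tau>\<in>Poly_Mapping.keys c. \<tau> \<in> K \<and> card \<tau> = m}"

text \<open>Simplicial boundary with the orientation induced by the order of the vertices:
  the coefficient of [tau] in the boundary of [tau + v] is (-1)^(number of u in tau with u < v).\<close>
definition boundary :: "nat set set \<Rightarrow> (nat set \<Rightarrow>\<^sub>0 real) \<Rightarrow> (nat set \<Rightarrow>\<^sub>0 real)" where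
  "boundary K c = Abs_poly_mapping (\<lambda>\<tau>. if \<tau> \<in> K then
      (\<Sum>v\<in>{v. v \<notin> \<tau> \<and> insert v \<tau> \<in> K}. (-1) ^ card {u\<in>\<tau>. u < v} * Poly_Mapping.lookup c (insert v \<tau>))
    else 0)"

text \<open>Reduced Betti number in simplicial degree m - 1.\<close>
definition rbetti :: "nat set set \<Rightarrow> nat \<Rightarrow> nat" where
  "rbetti K m = dim {c \<in> chains K m. boundary K c = 0} - dim (boundary K ` chains K (Suc m))"

text \<open>K has the (reduced) homology of the sphere S^(m-1): reduced Betti number 1 in
  simplicial degree m - 1 and 0 elsewhere.\<close>
definition homology_sphere_idx :: "nat set set \<Rightarrow> nat \<Rightarrow> bool" where
  "homology_sphere_idx K m \<longleftrightarrow> (\<forall>j. rbetti K j = (if j = m then 1 else 0))"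

definition homology_manifold :: "nat \<Rightarrow> nat set set \<Rightarrow> nat \<Rightarrow> bool" where
  "homology_manifold n K e \<longleftrightarrow> simplicial_complex n K \<and>
     (\<forall>\<sigma>\<in>K. \<sigma> \<noteq> {} \<longrightarrow> card \<sigma> \<le> e + 1 \<and> homology_sphere_idx (link K \<sigma>) (e + 1 - card \<sigma>))"

definition rational_sphere :: "nat \<Rightarrow> nat \<Rightarrow> nat set set \<Rightarrow> bool" where
  "rational_sphere n k K \<longleftrightarrow> homology_manifold n K (2*k) \<and> homology_sphere_idx K (2*k+1)
     \<and> (\<forall>i\<in>{1..n}. {i} \<in> K)"

type_synonym mon = "nat \<Rightarrow>\<^sub>0 nat"
type_synonym rpoly = "mon \<Rightarrow>\<^sub>0 real"

definition mdeg :: "mon \<Rightarrow> nat" where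
  "mdeg \<alpha> = (\<Sum>r\<in>Poly_Mapping.keys \<alpha>. Poly_Mapping.lookup \<alpha> r)"

definition homog :: "nat \<Rightarrow> nat \<Rightarrow> rpoly set" where
  "homog n i = {p. \<forall>\<alpha>\<in>Poly_Mapping.keys p. mdeg \<alpha> = i \<and> Poly_Mapping.keys \<alpha> \<subseteq> {1..n}}"

definition var :: "nat \<Rightarrow> rpoly" where
  "var i = Poly_Mapping.single (Poly_Mapping.single i 1) 1"

definition monom :: "mon \<Rightarrow> rpoly" where
  "monom \<beta> = Poly_Mapping.single \<beta> 1"

definition pd :: "nat \<Rightarrow> rpoly \<Rightarrow> rpoly" where
  "pd r p = Abs_poly_mapping (\<lambda>\<alpha>. real (Poly_Mapping.lookup \<alpha> r + 1) * Poly_Mapping.lookup p (\<alpha> + Poly_Mapping.single r 1))"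

text \<open>The differential operator m(d/dy) for the monomial m = x^beta.\<close>
definition mon_diff :: "mon \<Rightarrow> rpoly \<Rightarrow> rpoly" where
  "mon_diff \<beta> p = fold (\<lambda>r q. (pd r ^^ Poly_Mapping.lookup \<beta> r) q) (sorted_list_of_set (Poly_Mapping.keys \<beta>)) p"

definition ideal_gen :: "rpoly set \<Rightarrow> rpoly set" where
  "ideal_gen G = {p. \<exists>F c. finite F \<and> F \<subseteq> G \<and> p = (\<Sum>g\<in>F. c g * g)}"

text \<open>v i j is the j-th coordinate (j in 1..d) of vertex i.\<close>
definition theta :: "nat \<Rightarrow> (nat \<Rightarrow> nat \<Rightarrow> real) \<Rightarrow> nat \<Rightarrow> rpoly" where
  "theta n v j = (\<Sum>i\<in>{1..n}. v i j *\<^sub>R var i)"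

text \<open>The ideal I_K + (theta_1,...,theta_d); A^*(K) is the polynomial ring modulo it.\<close>
definition AJ :: "nat \<Rightarrow> nat set set \<Rightarrow> nat \<Rightarrow> (nat \<Rightarrow> nat \<Rightarrow> real) \<Rightarrow> rpoly set" where
  "AJ n K d v = ideal_gen ({monom \<beta> | \<beta>. Poly_Mapping.keys \<beta> \<subseteq> {1..n} \<and> Poly_Mapping.keys \<beta> \<notin> K}
                          \<union> {theta n v j | j. j \<in> {1..d}})"

text \<open>theta_1..theta_d is a linear system of parameters: R[K]/(theta) is finite dimensional.\<close>
definition is_lsop :: "nat \<Rightarrow> nat set set \<Rightarrow> nat \<Rightarrow> (nat \<Rightarrow> nat \<Rightarrow> real) \<Rightarrow> bool" where
  "is_lsop n K d v \<longleftrightarrow> (\<exists>N. \<forall>m>N. homog n m \<subseteq> AJ n K d v)"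

definition hard_lefschetz :: "nat \<Rightarrow> nat set set \<Rightarrow> nat \<Rightarrow> (nat \<Rightarrow> nat \<Rightarrow> real) \<Rightarrow> bool" where
  "hard_lefschetz n K d v \<longleftrightarrow> (\<exists>l\<in>homog n 1. \<forall>j. 2*j \<le> d \<longrightarrow>
     (\<forall>p\<in>homog n j. l ^ (d - 2*j) * p \<in> AJ n K d v \<longrightarrow> p \<in> AJ n K d v) \<and>
     (\<forall>q\<in>homog n (d - j). \<exists>p\<in>homog n j. q - l ^ (d - 2*j) * p \<in> AJ n K d v))"

definition stresses :: "nat \<Rightarrow> nat set set \<Rightarrow> nat \<Rightarrow> (nat \<Rightarrow> nat \<Rightarrow> real) \<Rightarrow> nat \<Rightarrow> rpoly set" where
  "stresses n K d v i = {p \<in> homog n i.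
      (\<forall>\<beta>. Poly_Mapping.keys \<beta> \<notin> K \<longrightarrow> mon_diff \<beta> p = 0) \<and>
      (\<forall>j\<in>{1..d}. (\<Sum>r\<in>{1..n}. v r j *\<^sub>R pd r p) = 0)}"

text \<open>kappa_i(S, D) = dim coker [A_i(D) \<rightarrow> A_i(S)] (the map is an inclusion).\<close>
definition kappa :: "nat \<Rightarrow> nat set set \<Rightarrow> nat set set \<Rightarrow> nat \<Rightarrow> (nat \<Rightarrow> nat \<Rightarrow> real) \<Rightarrow> nat \<Rightarrow> nat" where
  "kappa n S D d v i = dim (stresses n S d v i) - dim (stresses n D d v i)"

end

theory Submission
  imports Defs
begin

(* The apolarity pairing <q, p> = q(d/dy) p, which on degree-i polynomials is the sum of
   alpha! q_alpha p_alpha, is positive definite, and under it the degree-i stresses of a complex K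
   form exactly the orthogonal complement of the degree-i part of the ideal I_K + (theta):
   A_i(K) is the dual of A^i(K). Differentiating in the direction of a linear form l is adjoint
   to multiplication by l. Hard Lefschetz makes l : A^k(S) -> A^(k+1)(S) injective, so the
   transpose maps A_(k+1)(S) onto A_k(S); it also maps A_(k+1)(D) into A_k(D). A linear
   surjection that carries a subspace into a subspace cannot increase its codimension, hence
   dim A_k(S) - dim A_k(D) <= dim A_(k+1)(S) - dim A_(k+1)(D). *)

definition finite_dim :: "'a::real_vector set \<Rightarrow> bool" where
  "finite_dim V \<longleftrightarrow> (\<exists>B. finite B \<and> V \<subseteq> span B)"

lemma finite_dim_subset: "finite_dim V \<Longrightarrow> U \<subseteq> V \<Longrightarrow> finite_dim U"
  unfolding finite_dim_def by blast

lemma finite_dim_linear_image: "linear f \<Longrightarrow> finite_dim V \<Longrightarrow> finite_dim (f ` V)"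
  unfolding finite_dim_def by (metis finite_imageI image_mono span_linear_image)

lemma finite_dim_obtain_basis:
  assumes "finite_dim V"
  obtains B where "finite B" "B \<subseteq> V" "independent B" "V \<subseteq> span B" "card B = dim V"
proof -
  obtain B where B: "B \<subseteq> V" "independent B" "V \<subseteq> span B" "card B = dim V"
    by (rule real_vector.basis_exists)
  obtain M where "finite M" "V \<subseteq> span M"
    using assms unfolding finite_dim_def by blast
  then have "finite B"
    using real_vector.independent_span_bound B(1,2) by blast
  with B that show ?thesis
    by blast
qed

lemma card_le_dim_finite_dim:
  assumes "finite_dim V" "independent T" "T \<subseteq> V"
  shows "finite T \<and> card T \<le> dim V"
proof -
  obtain B where "finite B" "B \<subseteq> V" "independent B" "V \<subseteq> span B" "card B = dim V"
    by (rule finite_dim_obtain_basis[OF assms(1)])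
  then show ?thesis
    using real_vector.independent_span_bound[of B T] assms(2,3) by auto
qed

lemma dim_le_finite_dim:
  assumes "finite_dim V" "U \<subseteq> V"
  shows "dim U \<le> dim V"
proof -
  obtain B where "finite B" "B \<subseteq> V" "independent B" "V \<subseteq> span B" "card B = dim V"
    by (rule finite_dim_obtain_basis[OF assms(1)])
  then show ?thesis
    using real_vector.dim_le_card[of U B] assms(2) by auto
qed

lemma dim_less_finite_dim:
  assumes "finite_dim V" "subspace U" "U \<subseteq> V" "\<not> V \<subseteq> U"
  shows "dim U < dim V"
proof -
  obtain B where B: "finite B" "B \<subseteq> U" "independent B" "U \<subseteq> span B" "card B = dim U"
    by (rule finite_dim_obtain_basis[OF finite_dim_subset[OF assms(1,3)]])
  obtain x where x: "x \<in> V" "x \<notin> U"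
    using assms(4) by blast
  have "x \<notin> span B"
    using x(2) B(2) assms(2) real_vector.span_minimal by blast
  then have "independent (insert x B)" "card (insert x B) = Suc (card B)"
    using B(1,3) real_vector.independent_insertI real_vector.span_base by (auto simp: card_insert_if)
  moreover have "insert x B \<subseteq> V"
    using x(1) B(2) assms(3) by blast
  ultimately show ?thesis
    using card_le_dim_finite_dim[OF assms(1)] B(5) by fastforce
qed

lemma rank_nullity_le:
  assumes "finite_dim A" "subspace A" "linear f"
  shows "dim A \<le> dim (f ` A) + dim {x\<in>A. f x = 0}"
proof -
  obtain K where K: "finite K" "K \<subseteq> {x\<in>A. f x = 0}" "independent K"
      "{x\<in>A. f x = 0} \<subseteq> span K" "card K = dim {x\<in>A. f x = 0}"
    by (rule finite_dim_obtain_basis[OF finite_dim_subset[OF assms(1) Collect_restrict]])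
  obtain C where C: "finite C" "C \<subseteq> f ` A" "independent C" "f ` A \<subseteq> span C" "card C = dim (f ` A)"
    by (rule finite_dim_obtain_basis[OF finite_dim_linear_image[OF assms(3,1)]])
  obtain P where P: "P \<subseteq> A" "inj_on f P" "f ` P = C"
    using C(2) unfolding subset_image_inj by blast
  have "finite P" "card P = card C"
    using finite_image_iff[OF P(2)] card_image[OF P(2)] P(3) C(1) by simp_all
  have span_P: "span P \<subseteq> A"
    using P(1) assms(2) real_vector.span_minimal by blast
  have "A \<subseteq> span (P \<union> K)"
  proof
    fix a assume a: "a \<in> A"
    have "f a \<in> f ` span P"
      using a C(4) P(3) span_linear_image[OF assms(3), of P] by blast
    then obtain p where p: "p \<in> span P" "f p = f a"
      by (metis imageE)
    have "a - p \<in> A"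
      using a p(1) span_P assms(2) real_vector.subspace_diff by blast
    moreover have "f (a - p) = 0"
      using p(2) real_vector.linear_diff[OF assms(3)] by simp
    ultimately have "a - p \<in> span K"
      using K(4) by blast
    then have "(a - p) + p \<in> span (P \<union> K)"
      using p(1) real_vector.span_mono[of K "P \<union> K"] real_vector.span_mono[of P "P \<union> K"]
        real_vector.span_add by blast
    then show "a \<in> span (P \<union> K)"
      by simp
  qed
  then have "dim A \<le> card (P \<union> K)"
    using \<open>finite P\<close> K(1) real_vector.dim_le_card by blast
  also have "\<dots> \<le> card P + card K"
    by (rule card_Un_le)
  finally show ?thesis
    using \<open>card P = card C\<close> C(5) K(5) by linarith
qed

lemma rank_nullity_ge:
  assumes "finite_dim A" "linear f"
  shows "dim (f ` A) + dim {x\<in>A. f x = 0} \<le> dim A"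
proof -
  obtain K where K: "finite K" "K \<subseteq> {x\<in>A. f x = 0}" "independent K"
      "{x\<in>A. f x = 0} \<subseteq> span K" "card K = dim {x\<in>A. f x = 0}"
    by (rule finite_dim_obtain_basis[OF finite_dim_subset[OF assms(1) Collect_restrict]])
  obtain C where C: "K \<subseteq> C" "C \<subseteq> A" "independent C" "A \<subseteq> span C"
    using real_vector.maximal_independent_subset_extend[of K A] K(2,3) by blast
  have "finite C" "card C = dim A"
    using card_le_dim_finite_dim[OF assms(1) C(3,2)] real_vector.basis_card_eq_dim[OF C(2,4,3)]
    by auto
  have "f ` A \<subseteq> span (f ` C)"
    using C(4) span_linear_image[OF assms(2)] by blast
  also have "\<dots> \<subseteq> span (f ` (C - K))"
  proof -
    have "f ` C \<subseteq> insert 0 (f ` (C - K))"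
      using K(2) by blast
    then show ?thesis
      by (metis real_vector.span_insert_0 real_vector.span_mono)
  qed
  finally have "dim (f ` A) \<le> card (f ` (C - K))"
    using real_vector.dim_le_card \<open>finite C\<close> by blast
  also have "\<dots> \<le> card C - card K"
    using \<open>finite C\<close> C(1) card_image_le[of "C - K" f] card_Diff_subset[OF K(1) C(1)] by simp
  finally show ?thesis
    using \<open>card C = dim A\<close> K(5) C(1) \<open>finite C\<close> card_mono[of C K] by linarith
qed

lemma rank_nullity:
  assumes "finite_dim A" "subspace A" "linear f"
  shows "dim A = dim (f ` A) + dim {x\<in>A. f x = 0}"
  using rank_nullity_le[OF assms] rank_nullity_ge[OF assms(1,3)] by linarith

lemma dim_diff_le_of_linear_onto:
  assumes "linear f" "finite_dim A" "subspace A" "subspace A'" "A' \<subseteq> A"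
    and "f ` A = B" "f ` A' \<subseteq> B'" "B' \<subseteq> B"
  shows "dim B - dim B' \<le> dim A - dim A'"
proof -
  have fin_A': "finite_dim A'" and fin_B: "finite_dim B"
    using finite_dim_subset[OF assms(2,5)] finite_dim_linear_image[OF assms(1,2)] assms(6) by auto
  have "dim A = dim B + dim {x\<in>A. f x = 0}"
    using rank_nullity[OF assms(2,3,1)] assms(6) by simp
  moreover have "dim A' \<le> dim (f ` A') + dim {x\<in>A'. f x = 0}"
    using rank_nullity_le[OF fin_A' assms(4,1)] .
  moreover have "dim (f ` A') \<le> dim B'"
    using dim_le_finite_dim[OF finite_dim_subset[OF fin_B assms(8)] assms(7)] .
  moreover have "{x\<in>A'. f x = 0} \<subseteq> {x\<in>A. f x = 0}"
    using assms(5) by blast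
  then have "dim {x\<in>A'. f x = 0} \<le> dim {x\<in>A. f x = 0}"
    by (rule dim_le_finite_dim[OF finite_dim_subset[OF assms(2) Collect_restrict]])
  ultimately show ?thesis
    by linarith
qed

section \<open>Positive definite forms and orthogonal complements\<close>

definition orth_compl :: "('a \<Rightarrow> 'a \<Rightarrow> real) \<Rightarrow> 'a set \<Rightarrow> 'a set \<Rightarrow> 'a set" where
  "orth_compl B H W = {p \<in> H. \<forall>q\<in>W. B q p = 0}"

lemma subspace_orth_compl:
  assumes "bilinear B" "subspace H"
  shows "subspace (orth_compl B H W)"
proof -
  have "subspace {p. \<forall>q\<in>W. B q p = 0}"
    using assms(1) unfolding bilinear_def subspace_def
    by (auto simp: real_vector.linear_add real_vector.linear_scale real_vector.linear_0)
  then show ?thesis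
    unfolding orth_compl_def using real_vector.subspace_inter[OF assms(2)] by (simp add: Collect_conj_eq)
qed

lemma orth_compl_antimono: "W \<subseteq> W' \<Longrightarrow> orth_compl B H W' \<subseteq> orth_compl B H W"
  unfolding orth_compl_def by blast

locale positive_definite_form =
  fixes H :: "'a::real_vector set" and B :: "'a \<Rightarrow> 'a \<Rightarrow> real"
  assumes subspace: "subspace H" and finite_dim: "finite_dim H"
    and bilinear: "bilinear B" and symmetric: "B x y = B y x"
    and positive: "x \<in> H \<Longrightarrow> x \<noteq> 0 \<Longrightarrow> 0 < B x x"
begin

lemma exists_orthogonal_nonzero:
  assumes "subspace A" "subspace V" "V \<subseteq> A" "A \<subseteq> H" "\<not> A \<subseteq> V"
  shows "\<exists>q\<in>A. q \<noteq> 0 \<and> (\<forall>w\<in>V. B q w = 0)"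
proof -
  have fin_A: "finite_dim A"
    using finite_dim_subset[OF finite_dim assms(4)] .
  obtain E where E: "finite E" "E \<subseteq> V" "independent E" "V \<subseteq> span E" "card E = dim V"
    by (rule finite_dim_obtain_basis[OF finite_dim_subset[OF fin_A assms(3)]])
  \<comment> \<open>Pairing with a basis E of V has a nontrivial kernel on A, since dim V < dim A.\<close>
  define f where "f x = (\<Sum>e\<in>E. B x e *\<^sub>R e)" for x
  have lin_f: "linear f"
    unfolding f_def
    by (intro linearI) (simp_all add: bilinear_ladd[OF bilinear] bilinear_lmul[OF bilinear]
        scaleR_add_left sum.distrib scaleR_sum_right)
  have "f ` A \<subseteq> span E"
    unfolding f_def by (auto intro: real_vector.span_sum real_vector.span_scale real_vector.span_base)
  then have "dim (f ` A) \<le> dim V"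
    using real_vector.dim_le_card[OF _ E(1)] E(5) by metis
  then have "dim (f ` A) < dim A"
    using dim_less_finite_dim[OF fin_A assms(2,3,5)] by simp
  then have "dim {x\<in>A. f x = 0} \<noteq> 0"
    using rank_nullity[OF fin_A assms(1) lin_f] by linarith
  then obtain q where q: "q \<in> A" "f q = 0" "q \<noteq> 0"
    using real_vector.dim_le_card[of "{x\<in>A. f x = 0}" "{}"] by auto
  have "B q e = 0" if "e \<in> E" for e
    using q(2) E(1,3) that real_vector.independent_explicit_finite_subsets unfolding f_def
    by (metis real_vector.dependent_finite)
  then have "B q w = 0" if "w \<in> V" for w
    using that E(4) bilinear unfolding bilinear_def by (meson real_vector.linear_eq_0_on_span subsetD)
  with q show ?thesis
    by blast
qed

lemma orth_compl_orth_compl_subset: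
  assumes "subspace W" "W \<subseteq> H"
  shows "orth_compl B H (orth_compl B H W) \<subseteq> W"
proof
  fix x assume x: "x \<in> orth_compl B H (orth_compl B H W)"
  show "x \<in> W"
  proof (rule ccontr)
    assume "x \<notin> W"
    define A where "A = span (insert x W)"
    have "A \<subseteq> H"
      using x assms(2) subspace real_vector.span_minimal unfolding A_def orth_compl_def by blast
    moreover have "W \<subseteq> A" "\<not> A \<subseteq> W"
      using \<open>x \<notin> W\<close> real_vector.span_superset unfolding A_def by blast+
    ultimately obtain q where q: "q \<in> A" "q \<noteq> 0" "\<forall>w\<in>W. B q w = 0"
      using exists_orthogonal_nonzero[OF _ assms(1)] unfolding A_def by blast
    obtain c where "q - c *\<^sub>R x \<in> span W"
      using q(1) unfolding A_def real_vector.span_insert by blast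
    then have c: "q - c *\<^sub>R x \<in> W"
      using real_vector.span_eq_iff[THEN iffD2, OF assms(1)] by simp
    have "q \<in> orth_compl B H W"
      using q \<open>A \<subseteq> H\<close> symmetric unfolding orth_compl_def by auto
    then have "B q x = 0"
      using x symmetric unfolding orth_compl_def by auto
    then have "B q q = B q (q - c *\<^sub>R x)"
      using bilinear by (simp add: bilinear_rsub bilinear_rmul)
    also have "\<dots> = 0"
      using q(3) c by blast
    finally show False
      using positive q(2) \<open>A \<subseteq> H\<close> q(1) by fastforce
  qed
qed

end

lemma adjoint_image_orth_compl_subset:
  assumes adjoint: "\<And>q p. q \<in> H1 \<Longrightarrow> p \<in> H2 \<Longrightarrow> B1 q (L p) = B2 (M q) p"
    and "L ` H2 \<subseteq> H1" "I1 \<subseteq> H1" "M ` I1 \<subseteq> I2"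
  shows "L ` orth_compl B2 H2 I2 \<subseteq> orth_compl B1 H1 I1"
  using assms unfolding orth_compl_def by (auto simp: image_subset_iff subset_iff)

lemma adjoint_image_orth_compl:
  assumes F1: "positive_definite_form H1 B1" and F2: "positive_definite_form H2 B2"
    and adjoint: "\<And>q p. q \<in> H1 \<Longrightarrow> p \<in> H2 \<Longrightarrow> B1 q (L p) = B2 (M q) p"
    and "linear L" "L ` H2 \<subseteq> H1" "M ` H1 \<subseteq> H2"
    and "I1 \<subseteq> H1" "M ` I1 \<subseteq> I2" "subspace I2" "I2 \<subseteq> H2"
    and injective: "\<And>q. q \<in> H1 \<Longrightarrow> M q \<in> I2 \<Longrightarrow> q \<in> I1"
  shows "L ` orth_compl B2 H2 I2 = orth_compl B1 H1 I1"
proof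
  show "L ` orth_compl B2 H2 I2 \<subseteq> orth_compl B1 H1 I1"
    using adjoint_image_orth_compl_subset assms by blast
  define V where "V = L ` orth_compl B2 H2 I2"
  have "subspace V" "V \<subseteq> H1"
    unfolding V_def orth_compl_def
    using real_vector.linear_subspace_image[OF \<open>linear L\<close>
        subspace_orth_compl[OF positive_definite_form.bilinear[OF F2] positive_definite_form.subspace[OF F2]]]
      \<open>L ` H2 \<subseteq> H1\<close> unfolding orth_compl_def by auto
  have "M q \<in> I2" if q: "q \<in> orth_compl B1 H1 V" for q
  proof -
    have "B2 p (M q) = 0" if p: "p \<in> orth_compl B2 H2 I2" for p
    proof -
      have "B2 p (M q) = B1 q (L p)"
        using adjoint[of q p] p q positive_definite_form.symmetric[OF F2]
        unfolding orth_compl_def by simp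
      also have "\<dots> = 0"
        using p q positive_definite_form.symmetric[OF F1] unfolding orth_compl_def V_def by auto
      finally show ?thesis .
    qed
    then have "M q \<in> orth_compl B2 H2 (orth_compl B2 H2 I2)"
      using q \<open>M ` H1 \<subseteq> H2\<close> unfolding orth_compl_def by auto
    then show ?thesis
      using positive_definite_form.orth_compl_orth_compl_subset[OF F2 \<open>subspace I2\<close> \<open>I2 \<subseteq> H2\<close>] by blast
  qed
  then have "orth_compl B1 H1 V \<subseteq> I1"
    using injective unfolding orth_compl_def by blast
  then have "orth_compl B1 H1 I1 \<subseteq> orth_compl B1 H1 (orth_compl B1 H1 V)"
    by (rule orth_compl_antimono)
  also have "\<dots> \<subseteq> V"
    using positive_definite_form.orth_compl_orth_compl_subset[OF F1 \<open>subspace V\<close> \<open>V \<subseteq> H1\<close>] .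
  finally show "orth_compl B1 H1 I1 \<subseteq> L ` orth_compl B2 H2 I2"
    unfolding V_def .
qed

lemma lookup_scaleR_poly_mapping:
  "Poly_Mapping.lookup (c *\<^sub>R (x :: 'a \<Rightarrow>\<^sub>0 'b::real_vector)) a = c *\<^sub>R Poly_Mapping.lookup x a"
proof -
  have "finite {a. c *\<^sub>R Poly_Mapping.lookup x a \<noteq> 0}"
    by (rule finite_subset[of _ "Poly_Mapping.keys x"]) (auto simp: in_keys_iff)
  then show ?thesis
    unfolding scaleR_poly_mapping_def by simp
qed

lemma keys_scaleR_poly_mapping:
  "Poly_Mapping.keys (c *\<^sub>R (x :: 'a \<Rightarrow>\<^sub>0 'b::real_vector)) \<subseteq> Poly_Mapping.keys x"
  by (auto simp: in_keys_iff lookup_scaleR_poly_mapping)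

lemma scaleR_eq_single_0_mult: "c *\<^sub>R (x :: rpoly) = Poly_Mapping.single 0 c * x"
proof -
  have "c *\<^sub>R x = Poly_Mapping.map ((*) c) x"
    by (rule poly_mapping_eqI) (simp add: lookup_scaleR_poly_mapping map.rep_eq when_def)
  then show ?thesis
    by (simp add: mult_map_scale_conv_mult)
qed

lemma mult_scaleR_left: "(c *\<^sub>R (a :: rpoly)) * b = c *\<^sub>R (a * b)"
  unfolding scaleR_eq_single_0_mult by (simp add: mult.assoc)

lemma mult_scaleR_right: "(a :: rpoly) * (c *\<^sub>R b) = c *\<^sub>R (a * b)"
  using mult_scaleR_left[of c b a] by (simp add: mult.commute)

lemma lookup_monom: "Poly_Mapping.lookup (monom \<beta>) \<alpha> = (if \<alpha> = \<beta> then 1 else 0)"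
  unfolding monom_def lookup_single when_def by auto

lemma keys_monom: "Poly_Mapping.keys (monom \<beta>) = {\<beta>}"
  unfolding monom_def by simp

lemma monom_mult: "monom \<alpha> * monom \<beta> = monom (\<alpha> + \<beta>)"
  unfolding monom_def by (simp add: mult_single)

lemma sum_monom_expansion: "(\<Sum>\<alpha>\<in>Poly_Mapping.keys p. Poly_Mapping.lookup p \<alpha> *\<^sub>R monom \<alpha>) = p"
proof (rule poly_mapping_eqI)
  fix \<beta>
  have "Poly_Mapping.lookup (\<Sum>\<alpha>\<in>Poly_Mapping.keys p. Poly_Mapping.lookup p \<alpha> *\<^sub>R monom \<alpha>) \<beta>
      = (\<Sum>\<alpha>\<in>Poly_Mapping.keys p. if \<alpha> = \<beta> then Poly_Mapping.lookup p \<alpha> else 0)"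
    unfolding lookup_sum lookup_scaleR_poly_mapping lookup_monom by (intro sum.cong) auto
  also have "\<dots> = Poly_Mapping.lookup p \<beta>"
    by (simp add: in_keys_iff)
  finally show "Poly_Mapping.lookup (\<Sum>\<alpha>\<in>Poly_Mapping.keys p. Poly_Mapping.lookup p \<alpha> *\<^sub>R monom \<alpha>) \<beta>
      = Poly_Mapping.lookup p \<beta>" .
qed

definition unit_mon :: "nat \<Rightarrow> mon" where
  "unit_mon r = Poly_Mapping.single r 1"

lemma var_eq_monom: "var r = monom (unit_mon r)"
  by (simp add: var_def monom_def unit_mon_def)

lemma keys_unit_mon: "Poly_Mapping.keys (unit_mon r) = {r}"
  unfolding unit_mon_def by simp

lemma lookup_unit_mon: "Poly_Mapping.lookup (unit_mon r) s = (if s = r then 1 else 0)"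
  unfolding unit_mon_def lookup_single when_def by auto

lemma unit_mon_inject: "unit_mon r = unit_mon s \<longleftrightarrow> r = s"
  by (metis lookup_unit_mon zero_neq_one)

lemma keys_add_mon: "Poly_Mapping.keys ((\<alpha>::mon) + \<beta>) = Poly_Mapping.keys \<alpha> \<union> Poly_Mapping.keys \<beta>"
  by (auto simp: in_keys_iff lookup_add)

lemma mdeg_eq_sum_superset:
  assumes "finite X" "Poly_Mapping.keys \<alpha> \<subseteq> X"
  shows "mdeg \<alpha> = (\<Sum>r\<in>X. Poly_Mapping.lookup \<alpha> r)"
  unfolding mdeg_def by (rule sum.mono_neutral_left) (use assms in \<open>auto simp: in_keys_iff\<close>)

lemma mdeg_add: "mdeg (\<alpha> + \<beta>) = mdeg \<alpha> + mdeg \<beta>"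
proof -
  let ?X = "Poly_Mapping.keys \<alpha> \<union> Poly_Mapping.keys \<beta>"
  have "mdeg (\<alpha> + \<beta>) = (\<Sum>r\<in>?X. Poly_Mapping.lookup \<alpha> r) + (\<Sum>r\<in>?X. Poly_Mapping.lookup \<beta> r)"
    by (subst mdeg_eq_sum_superset[of ?X]) (auto simp: keys_add_mon lookup_add sum.distrib)
  also have "\<dots> = mdeg \<alpha> + mdeg \<beta>"
    using mdeg_eq_sum_superset[of ?X \<alpha>] mdeg_eq_sum_superset[of ?X \<beta>] by simp
  finally show ?thesis .
qed

lemma mdeg_unit_mon: "mdeg (unit_mon r) = 1"
  unfolding mdeg_def keys_unit_mon by (simp add: lookup_unit_mon)

lemma mdeg_eq_1_iff: "mdeg \<alpha> = 1 \<longleftrightarrow> (\<exists>r. \<alpha> = unit_mon r)"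
proof
  assume deg: "mdeg \<alpha> = 1"
  then obtain r where r: "r \<in> Poly_Mapping.keys \<alpha>"
    unfolding mdeg_def by fastforce
  have pos: "0 < Poly_Mapping.lookup \<alpha> s" if "s \<in> Poly_Mapping.keys \<alpha>" for s
    using that by (simp add: in_keys_iff)
  have "Poly_Mapping.lookup \<alpha> r + (\<Sum>s\<in>Poly_Mapping.keys \<alpha> - {r}. Poly_Mapping.lookup \<alpha> s) = 1"
    using deg r unfolding mdeg_def by (simp add: sum.remove)
  then have "Poly_Mapping.lookup \<alpha> r = 1" "(\<Sum>s\<in>Poly_Mapping.keys \<alpha> - {r}. Poly_Mapping.lookup \<alpha> s) = 0"
    using pos[OF r] by linarith+
  moreover have "Poly_Mapping.keys \<alpha> \<subseteq> {r}"
  proof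
    fix s assume s: "s \<in> Poly_Mapping.keys \<alpha>"
    then have "s = r \<or> Poly_Mapping.lookup \<alpha> s = 0"
      using calculation(2) by (auto simp: sum_eq_0_iff)
    then show "s \<in> {r}"
      using pos[OF s] by auto
  qed
  ultimately have "\<alpha> = unit_mon r"
    by (intro poly_mapping_eqI) (auto simp: lookup_unit_mon in_keys_iff)
  then show "\<exists>r. \<alpha> = unit_mon r" ..
qed (auto simp: mdeg_unit_mon)

definition monoms :: "nat \<Rightarrow> nat \<Rightarrow> mon set" where
  "monoms n i = {\<alpha>. mdeg \<alpha> = i \<and> Poly_Mapping.keys \<alpha> \<subseteq> {1..n}}"

lemma finite_monoms: "finite (monoms n i)"
proof -
  let ?f = "\<lambda>\<alpha>. restrict (Poly_Mapping.lookup \<alpha>) {1..n}"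
  have "inj_on ?f (monoms n i)"
  proof (rule inj_onI)
    fix \<alpha> \<beta> assume mon: "\<alpha> \<in> monoms n i" "\<beta> \<in> monoms n i" and eq: "?f \<alpha> = ?f \<beta>"
    show "\<alpha> = \<beta>"
    proof (rule poly_mapping_eqI)
      fix r
      show "Poly_Mapping.lookup \<alpha> r = Poly_Mapping.lookup \<beta> r"
      proof (cases "r \<in> {1..n}")
        case True
        then show ?thesis
          using fun_cong[OF eq, of r] by simp
      next
        case False
        then have "r \<notin> Poly_Mapping.keys \<alpha>" "r \<notin> Poly_Mapping.keys \<beta>"
          using mon unfolding monoms_def by auto
        then show ?thesis
          by (simp add: in_keys_iff)
      qed
    qed
  qed
  moreover have "?f ` monoms n i \<subseteq> PiE {1..n} (\<lambda>_. {0..i})"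
  proof -
    have "Poly_Mapping.lookup \<alpha> r \<le> mdeg \<alpha>" for \<alpha> r
      unfolding mdeg_def by (cases "r \<in> Poly_Mapping.keys \<alpha>") (auto intro: member_le_sum simp: in_keys_iff)
    then show ?thesis
      unfolding monoms_def by auto
  qed
  then have "finite (?f ` monoms n i)"
    by (rule finite_subset) (simp add: finite_PiE)
  ultimately show ?thesis
    using finite_image_iff by blast
qed

definition mon_fact :: "mon \<Rightarrow> real" where
  "mon_fact \<alpha> = (\<Prod>r\<in>Poly_Mapping.keys \<alpha>. fact (Poly_Mapping.lookup \<alpha> r))"

lemma mon_fact_pos: "0 < mon_fact \<alpha>"
  unfolding mon_fact_def by (intro prod_pos) simp

lemma mon_fact_add_unit_mon:
  "mon_fact (\<gamma> + unit_mon r) = real (Poly_Mapping.lookup \<gamma> r + 1) * mon_fact \<gamma>"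
proof -
  let ?X = "insert r (Poly_Mapping.keys \<gamma>)"
  have split: "mon_fact \<alpha> = fact (Poly_Mapping.lookup \<alpha> r) * (\<Prod>s\<in>?X - {r}. fact (Poly_Mapping.lookup \<alpha> s))"
    if "Poly_Mapping.keys \<alpha> \<subseteq> ?X" for \<alpha>
  proof -
    have "mon_fact \<alpha> = (\<Prod>s\<in>?X. fact (Poly_Mapping.lookup \<alpha> s))"
      unfolding mon_fact_def using that by (intro prod.mono_neutral_left) (auto simp: in_keys_iff)
    then show ?thesis
      by (simp add: prod.insert_remove)
  qed
  have lookup_eq: "Poly_Mapping.lookup (\<gamma> + unit_mon r) s = Poly_Mapping.lookup \<gamma> s + (if s = r then 1 else 0)" for s
    by (simp add: lookup_add lookup_unit_mon)
  have "(\<Prod>s\<in>?X - {r}. fact (Poly_Mapping.lookup (\<gamma> + unit_mon r) s))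
      = (\<Prod>s\<in>?X - {r}. fact (Poly_Mapping.lookup \<gamma> s) :: real)"
    by (intro prod.cong) (auto simp: lookup_eq)
  then have "mon_fact (\<gamma> + unit_mon r)
      = fact (Poly_Mapping.lookup \<gamma> r + 1) * (\<Prod>s\<in>?X - {r}. fact (Poly_Mapping.lookup \<gamma> s))"
    using split[of "\<gamma> + unit_mon r"] by (simp add: keys_add_mon keys_unit_mon lookup_eq)
  then show ?thesis
    using split[OF subset_insertI] by simp
qed

lemma homog_iff_keys: "p \<in> homog n i \<longleftrightarrow> Poly_Mapping.keys p \<subseteq> monoms n i"
  unfolding homog_def monoms_def by auto

lemma lookup_homog_eq_0: "p \<in> homog n i \<Longrightarrow> \<alpha> \<notin> monoms n i \<Longrightarrow> Poly_Mapping.lookup p \<alpha> = 0"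
  unfolding homog_iff_keys by (auto simp: in_keys_iff)

lemma monom_in_homog: "\<alpha> \<in> monoms n i \<Longrightarrow> monom \<alpha> \<in> homog n i"
  unfolding homog_iff_keys keys_monom by simp

lemma subspace_homog: "subspace (homog n i)"
proof -
  have "x + y \<in> homog n i" if "x \<in> homog n i" "y \<in> homog n i" for x y
    using that keys_add[of x y] unfolding homog_iff_keys by blast
  moreover have "c *\<^sub>R x \<in> homog n i" if "x \<in> homog n i" for c x
    using that keys_scaleR_poly_mapping[of c x] unfolding homog_iff_keys by blast
  moreover have "0 \<in> homog n i"
    unfolding homog_iff_keys by simp
  ultimately show ?thesis
    unfolding subspace_def by blast
qed

lemma homog_subset_span_monoms: "homog n i \<subseteq> span (monom ` monoms n i)"
proof
  fix p assume "p \<in> homog n i"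
  then have "(\<Sum>\<alpha>\<in>Poly_Mapping.keys p. Poly_Mapping.lookup p \<alpha> *\<^sub>R monom \<alpha>) \<in> span (monom ` monoms n i)"
    unfolding homog_iff_keys
    by (intro real_vector.span_sum real_vector.span_scale real_vector.span_base) blast
  then show "p \<in> span (monom ` monoms n i)"
    by (simp only: sum_monom_expansion)
qed

lemma finite_dim_homog: "finite_dim (homog n i)"
  unfolding finite_dim_def
  by (intro exI[of _ "monom ` monoms n i"] conjI finite_imageI finite_monoms homog_subset_span_monoms)

lemma homog_mult: "p \<in> homog n a \<Longrightarrow> q \<in> homog n b \<Longrightarrow> p * q \<in> homog n (a + b)"
  unfolding homog_iff_keys monoms_def using keys_mult[of p q]
  by (fastforce simp: mdeg_add keys_add_mon)

section \<open>The apolarity pairing\<close>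

(* On homogeneous polynomials of degree i, apolar n i q p is the constant term of q(d/dy) p. *)
definition apolar :: "nat \<Rightarrow> nat \<Rightarrow> rpoly \<Rightarrow> rpoly \<Rightarrow> real" where
  "apolar n i q p = (\<Sum>\<alpha>\<in>monoms n i. mon_fact \<alpha> * Poly_Mapping.lookup q \<alpha> * Poly_Mapping.lookup p \<alpha>)"

lemma apolar_sym: "apolar n i q p = apolar n i p q"
  unfolding apolar_def by (simp add: mult_ac)

lemma apolar_scaleR_left: "apolar n i (c *\<^sub>R q) p = c * apolar n i q p"
  unfolding apolar_def lookup_scaleR_poly_mapping by (simp add: sum_distrib_left mult_ac)

lemma linear_apolar: "linear (\<lambda>q. apolar n i q p)"
proof (rule linearI)
  show "apolar n i (x + y) p = apolar n i x p + apolar n i y p" for x y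
    unfolding apolar_def lookup_add by (simp add: algebra_simps sum.distrib)
  show "apolar n i (c *\<^sub>R x) p = c *\<^sub>R apolar n i x p" for c x
    by (simp add: apolar_scaleR_left)
qed

lemma apolar_sum_left: "apolar n i (\<Sum>x\<in>X. f x) p = (\<Sum>x\<in>X. apolar n i (f x) p)"
  using real_vector.linear_sum[OF linear_apolar[of n i p], of f X] by simp

lemma bilinear_apolar: "bilinear (apolar n i)"
proof -
  have "linear (apolar n i q)" for q
  proof -
    have "(\<lambda>p. apolar n i p q) = apolar n i q"
      by (rule ext) (rule apolar_sym)
    then show ?thesis
      using linear_apolar[of n i q] by simp
  qed
  then show ?thesis
    unfolding bilinear_def using linear_apolar by blast
qed

lemma apolar_monom:
  "apolar n i (monom \<gamma>) p = (if \<gamma> \<in> monoms n i then mon_fact \<gamma> * Poly_Mapping.lookup p \<gamma> else 0)"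
proof -
  have "apolar n i (monom \<gamma>) p
      = (\<Sum>\<alpha>\<in>monoms n i. if \<alpha> = \<gamma> then mon_fact \<gamma> * Poly_Mapping.lookup p \<gamma> else 0)"
    unfolding apolar_def lookup_monom by (intro sum.cong) auto
  then show ?thesis
    using finite_monoms by simp
qed

lemma apolar_self_pos:
  assumes "p \<in> homog n i" "p \<noteq> 0"
  shows "0 < apolar n i p p"
proof -
  obtain \<alpha> where \<alpha>: "\<alpha> \<in> Poly_Mapping.keys p"
    using assms(2) by fastforce
  then have "\<alpha> \<in> monoms n i" "0 < (Poly_Mapping.lookup p \<alpha>)\<^sup>2"
    using assms(1) by (auto simp: homog_iff_keys in_keys_iff)
  then have "\<alpha> \<in> monoms n i" "0 < mon_fact \<alpha> * Poly_Mapping.lookup p \<alpha> * Poly_Mapping.lookup p \<alpha>"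
    using mon_fact_pos[of \<alpha>] by (simp_all add: power2_eq_square mult.assoc)
  moreover have "0 \<le> mon_fact \<beta> * Poly_Mapping.lookup p \<beta> * Poly_Mapping.lookup p \<beta>" for \<beta>
    using mon_fact_pos[of \<beta>] by (simp add: mult.assoc)
  ultimately show ?thesis
    unfolding apolar_def by (intro sum_pos2[OF finite_monoms]) auto
qed

lemma positive_definite_apolar: "positive_definite_form (homog n i) (apolar n i)"
  by unfold_locales
    (auto intro: subspace_homog finite_dim_homog bilinear_apolar apolar_sym apolar_self_pos)

lemma lookup_pd:
  "Poly_Mapping.lookup (pd r p) \<alpha> = real (Poly_Mapping.lookup \<alpha> r + 1) * Poly_Mapping.lookup p (\<alpha> + unit_mon r)"
proof -
  have "{\<alpha>. real (Poly_Mapping.lookup \<alpha> r + 1) * Poly_Mapping.lookup p (\<alpha> + unit_mon r) \<noteq> 0}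
      \<subseteq> (\<lambda>\<alpha>. \<alpha> + unit_mon r) -` Poly_Mapping.keys p"
    by (auto simp: in_keys_iff)
  moreover have "finite ((\<lambda>\<alpha>. \<alpha> + unit_mon r) -` Poly_Mapping.keys p)"
    by (rule finite_vimageI) (auto intro: injI)
  ultimately have "finite {\<alpha>. real (Poly_Mapping.lookup \<alpha> r + 1) * Poly_Mapping.lookup p (\<alpha> + unit_mon r) \<noteq> 0}"
    by (rule finite_subset)
  then show ?thesis
    unfolding pd_def unit_mon_def[symmetric] by simp
qed

definition dir_deriv :: "nat \<Rightarrow> (nat \<Rightarrow> real) \<Rightarrow> rpoly \<Rightarrow> rpoly" where
  "dir_deriv n w p = (\<Sum>r\<in>{1..n}. w r *\<^sub>R pd r p)"

lemma lookup_dir_deriv: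
  "Poly_Mapping.lookup (dir_deriv n w p) \<gamma>
    = (\<Sum>r\<in>{1..n}. w r * real (Poly_Mapping.lookup \<gamma> r + 1) * Poly_Mapping.lookup p (\<gamma> + unit_mon r))"
  unfolding dir_deriv_def lookup_sum lookup_scaleR_poly_mapping lookup_pd by (simp add: mult.assoc)

lemma linear_dir_deriv: "linear (dir_deriv n w)"
  by (rule linearI; rule poly_mapping_eqI)
    (simp_all add: lookup_dir_deriv lookup_add lookup_scaleR_poly_mapping algebra_simps
      sum.distrib sum_distrib_left)

lemma lookup_dir_deriv_neq_0:
  assumes "p \<in> homog n i" "Poly_Mapping.lookup (dir_deriv n w p) \<gamma> \<noteq> 0"
  obtains i' where "i = Suc i'" "\<gamma> \<in> monoms n i'"
proof -
  obtain r where "r \<in> {1..n}" "Poly_Mapping.lookup p (\<gamma> + unit_mon r) \<noteq> 0"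
    using assms(2) unfolding lookup_dir_deriv by (metis (no_types, lifting) mult_zero_right sum.neutral)
  then have "\<gamma> + unit_mon r \<in> monoms n i"
    using lookup_homog_eq_0[OF assms(1)] by auto
  then have "i = Suc (mdeg \<gamma>)" "\<gamma> \<in> monoms n (mdeg \<gamma>)"
    unfolding monoms_def by (auto simp: mdeg_add mdeg_unit_mon keys_add_mon)
  then show ?thesis
    by (rule that)
qed

lemma dir_deriv_homog:
  assumes "p \<in> homog n (Suc i)"
  shows "dir_deriv n w p \<in> homog n i"
  unfolding homog_iff_keys
proof
  fix \<gamma> assume "\<gamma> \<in> Poly_Mapping.keys (dir_deriv n w p)"
  then have "Poly_Mapping.lookup (dir_deriv n w p) \<gamma> \<noteq> 0"
    by (simp add: in_keys_iff)
  then obtain i' where "Suc i = Suc i'" "\<gamma> \<in> monoms n i'"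
    by (rule lookup_dir_deriv_neq_0[OF assms])
  then show "\<gamma> \<in> monoms n i"
    by simp
qed

definition lin_form :: "nat \<Rightarrow> (nat \<Rightarrow> real) \<Rightarrow> rpoly" where
  "lin_form n w = (\<Sum>r\<in>{1..n}. w r *\<^sub>R var r)"

lemma theta_eq_lin_form: "theta n v j = lin_form n (\<lambda>r. v r j)"
  unfolding theta_def lin_form_def ..

lemma lin_form_mult_monom:
  "lin_form n w * monom \<gamma> = (\<Sum>r\<in>{1..n}. w r *\<^sub>R monom (\<gamma> + unit_mon r))"
  unfolding lin_form_def var_eq_monom
  by (simp add: sum_distrib_right mult_scaleR_left monom_mult add.commute)

lemma lin_form_mult_homog:
  assumes "q \<in> homog n i"
  shows "lin_form n w * q \<in> homog n (Suc i)"
proof -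
  have "lin_form n w \<in> homog n 1"
    unfolding lin_form_def var_eq_monom
    by (intro real_vector.subspace_sum[OF subspace_homog] real_vector.subspace_scale[OF subspace_homog]
        monom_in_homog) (simp add: monoms_def mdeg_unit_mon keys_unit_mon)
  then have "lin_form n w * q \<in> homog n (1 + i)"
    by (rule homog_mult[OF _ assms])
  then show ?thesis
    by simp
qed

lemma homog_1_eq_lin_form:
  assumes "l \<in> homog n 1"
  shows "l = lin_form n (\<lambda>r. Poly_Mapping.lookup l (unit_mon r))"
proof (rule poly_mapping_eqI)
  fix \<alpha>
  have "Poly_Mapping.lookup (lin_form n (\<lambda>r. Poly_Mapping.lookup l (unit_mon r))) \<alpha>
      = (\<Sum>r\<in>{1..n}. if \<alpha> = unit_mon r then Poly_Mapping.lookup l \<alpha> else 0)"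
    unfolding lin_form_def var_eq_monom lookup_sum lookup_scaleR_poly_mapping lookup_monom
    by (intro sum.cong) auto
  also have "\<dots> = Poly_Mapping.lookup l \<alpha>"
  proof (cases "\<alpha> \<in> monoms n 1")
    case True
    then obtain s where "\<alpha> = unit_mon s" "s \<in> {1..n}"
      unfolding monoms_def mdeg_eq_1_iff by (auto simp: keys_unit_mon)
    then show ?thesis
      by (simp add: unit_mon_inject)
  next
    case False
    then have "\<alpha> \<noteq> unit_mon r" if "r \<in> {1..n}" for r
      using that unfolding monoms_def by (auto simp: mdeg_unit_mon keys_unit_mon)
    then show ?thesis
      using lookup_homog_eq_0[OF assms False] by simp
  qed
  finally show "Poly_Mapping.lookup l \<alpha> = Poly_Mapping.lookup (lin_form n (\<lambda>r. Poly_Mapping.lookup l (unit_mon r))) \<alpha>"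
    by simp
qed

lemma apolar_lin_form_mult_monom:
  assumes "p \<in> homog n i"
  shows "apolar n i (lin_form n w * monom \<gamma>) p = mon_fact \<gamma> * Poly_Mapping.lookup (dir_deriv n w p) \<gamma>"
proof -
  have "apolar n i (monom (\<gamma> + unit_mon r)) p
      = mon_fact \<gamma> * (real (Poly_Mapping.lookup \<gamma> r + 1) * Poly_Mapping.lookup p (\<gamma> + unit_mon r))" for r
    using lookup_homog_eq_0[OF assms, of "\<gamma> + unit_mon r"]
    by (simp add: apolar_monom mon_fact_add_unit_mon)
  then show ?thesis
    unfolding lin_form_mult_monom apolar_sum_left apolar_scaleR_left lookup_dir_deriv
    by (simp add: sum_distrib_left mult_ac)
qed

lemma apolar_dir_deriv:
  assumes "q \<in> homog n i" "p \<in> homog n (Suc i)"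
  shows "apolar n i q (dir_deriv n w p) = apolar n (Suc i) (lin_form n w * q) p"
proof -
  have "apolar n i q (dir_deriv n w p) = (\<Sum>\<gamma>\<in>Poly_Mapping.keys q.
      Poly_Mapping.lookup q \<gamma> * (mon_fact \<gamma> * Poly_Mapping.lookup (dir_deriv n w p) \<gamma>))"
    using assms(1)
    by (subst sum_monom_expansion[of q, symmetric])
      (auto simp: apolar_sum_left apolar_scaleR_left apolar_monom homog_iff_keys intro!: sum.cong)
  also have "\<dots> = apolar n (Suc i) (lin_form n w * q) p"
    by (subst (2) sum_monom_expansion[of q, symmetric])
      (simp add: sum_distrib_left mult_scaleR_right apolar_sum_left apolar_scaleR_left
        apolar_lin_form_mult_monom[OF assms(2)])
  finally show ?thesis .
qed

section \<open>Stresses as the dual of the face ring\<close>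

lemma lookup_pd_funpow:
  "Poly_Mapping.lookup ((pd r ^^ m) p) \<gamma>
    = pochhammer (real (Poly_Mapping.lookup \<gamma> r + 1)) m * Poly_Mapping.lookup p (\<gamma> + Poly_Mapping.single r m)"
proof (induction m arbitrary: \<gamma>)
  case 0
  then show ?case
    by simp
next
  case (Suc m)
  have "\<gamma> + unit_mon r + Poly_Mapping.single r m = \<gamma> + Poly_Mapping.single r (Suc m)"
    unfolding unit_mon_def by (simp add: add.assoc flip: single_add)
  then show ?case
    using Suc.IH[of "\<gamma> + unit_mon r"]
    by (simp add: lookup_pd pochhammer_rec lookup_add lookup_unit_mon add_ac)
qed

lemma lookup_fold_pd:
  "\<exists>C::real. C \<noteq> 0 \<and> (\<forall>p. Poly_Mapping.lookup (fold (\<lambda>r. pd r ^^ f r) xs p) \<gamma>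
      = C * Poly_Mapping.lookup p (\<gamma> + (\<Sum>r\<leftarrow>xs. Poly_Mapping.single r (f r))))"
proof (induction xs arbitrary: \<gamma>)
  case Nil
  then show ?case
    by (intro exI[of _ 1]) simp
next
  case (Cons x xs)
  let ?s = "\<Sum>r\<leftarrow>xs. Poly_Mapping.single r (f r)"
  obtain C where C: "C \<noteq> 0 \<and> (\<forall>p. Poly_Mapping.lookup (fold (\<lambda>r. pd r ^^ f r) xs p) \<gamma>
      = C * Poly_Mapping.lookup p (\<gamma> + ?s))"
    using Cons.IH[of \<gamma>] by (rule exE)
  let ?c = "pochhammer (real (Poly_Mapping.lookup (\<gamma> + ?s) x + 1)) (f x)"
  have "?c \<noteq> 0"
    by (simp add: pochhammer_eq_0_iff)
  moreover have "\<gamma> + ?s + Poly_Mapping.single x (f x) = \<gamma> + (\<Sum>r\<leftarrow>x # xs. Poly_Mapping.single r (f r))"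
    by (simp only: list.map sum_list.Cons add.assoc add.commute[of ?s])
  ultimately show ?case
    using C by (intro exI[of _ "C * ?c"]) (simp add: lookup_pd_funpow)
qed

lemma lookup_mon_diff:
  "\<exists>C::real. C \<noteq> 0 \<and> (\<forall>p. Poly_Mapping.lookup (mon_diff \<beta> p) \<gamma> = C * Poly_Mapping.lookup p (\<gamma> + \<beta>))"
proof -
  let ?xs = "sorted_list_of_set (Poly_Mapping.keys \<beta>)"
  have "(\<Sum>r\<leftarrow>?xs. Poly_Mapping.single r (Poly_Mapping.lookup \<beta> r))
      = (\<Sum>r\<in>Poly_Mapping.keys \<beta>. Poly_Mapping.single r (Poly_Mapping.lookup \<beta> r))"
    by (simp add: sum_list_distinct_conv_sum_set)
  also have "\<dots> = \<beta>"
  proof (rule poly_mapping_eqI)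
    fix s
    show "Poly_Mapping.lookup (\<Sum>r\<in>Poly_Mapping.keys \<beta>. Poly_Mapping.single r (Poly_Mapping.lookup \<beta> r)) s
        = Poly_Mapping.lookup \<beta> s"
      by (simp add: lookup_sum lookup_single when_def in_keys_iff)
  qed
  finally show ?thesis
    unfolding mon_diff_def using lookup_fold_pd[of "Poly_Mapping.lookup \<beta>" ?xs \<gamma>] by simp
qed

lemma mon_diff_eq_0_iff: "mon_diff \<beta> p = 0 \<longleftrightarrow> (\<forall>\<gamma>. Poly_Mapping.lookup p (\<gamma> + \<beta>) = 0)"
proof -
  have "Poly_Mapping.lookup (mon_diff \<beta> p) \<gamma> = 0 \<longleftrightarrow> Poly_Mapping.lookup p (\<gamma> + \<beta>) = 0" for \<gamma>
    using lookup_mon_diff[of \<beta> \<gamma>] by auto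
  then show ?thesis
    by (auto simp: poly_mapping_eq_iff fun_eq_iff)
qed

lemma simplicial_complex_subset: "simplicial_complex n K \<Longrightarrow> \<sigma> \<in> K \<Longrightarrow> \<tau> \<subseteq> \<sigma> \<Longrightarrow> \<tau> \<in> K"
  unfolding simplicial_complex_def by blast

lemma mon_diff_vanish_iff_keys_in:
  assumes "simplicial_complex n K"
  shows "(\<forall>\<beta>. Poly_Mapping.keys \<beta> \<notin> K \<longrightarrow> mon_diff \<beta> p = 0)
    \<longleftrightarrow> (\<forall>\<alpha>\<in>Poly_Mapping.keys p. Poly_Mapping.keys \<alpha> \<in> K)"
proof (intro iffI allI ballI impI)
  fix \<alpha> assume vanish: "\<forall>\<beta>. Poly_Mapping.keys \<beta> \<notin> K \<longrightarrow> mon_diff \<beta> p = 0"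
    and \<alpha>: "\<alpha> \<in> Poly_Mapping.keys p"
  show "Poly_Mapping.keys \<alpha> \<in> K"
  proof (rule ccontr)
    assume "Poly_Mapping.keys \<alpha> \<notin> K"
    then have "Poly_Mapping.lookup p (0 + \<alpha>) = 0"
      using vanish unfolding mon_diff_eq_0_iff by blast
    then show False
      using \<alpha> by (simp add: in_keys_iff)
  qed
next
  fix \<beta> :: mon assume supp: "\<forall>\<alpha>\<in>Poly_Mapping.keys p. Poly_Mapping.keys \<alpha> \<in> K"
    and \<beta>: "Poly_Mapping.keys \<beta> \<notin> K"
  have "Poly_Mapping.lookup p (\<gamma> + \<beta>) = 0" for \<gamma>
  proof (rule ccontr)
    assume "Poly_Mapping.lookup p (\<gamma> + \<beta>) \<noteq> 0"
    then have "Poly_Mapping.keys (\<gamma> + \<beta>) \<in> K"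
      using supp by (simp add: in_keys_iff)
    then show False
      using \<beta> simplicial_complex_subset[OF assms] by (simp add: keys_add_mon)
  qed
  then show "mon_diff \<beta> p = 0"
    unfolding mon_diff_eq_0_iff by blast
qed

lemma stresses_iff:
  assumes "simplicial_complex n K"
  shows "p \<in> stresses n K d v i \<longleftrightarrow> p \<in> homog n i \<and>
    (\<forall>\<alpha>\<in>Poly_Mapping.keys p. Poly_Mapping.keys \<alpha> \<in> K) \<and>
    (\<forall>j\<in>{1..d}. dir_deriv n (\<lambda>r. v r j) p = 0)"
proof -
  have "p \<in> stresses n K d v i \<longleftrightarrow> p \<in> homog n i \<and>
      (\<forall>\<beta>. Poly_Mapping.keys \<beta> \<notin> K \<longrightarrow> mon_diff \<beta> p = 0) \<and>
      (\<forall>j\<in>{1..d}. dir_deriv n (\<lambda>r. v r j) p = 0)"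
    unfolding stresses_def dir_deriv_def by (rule mem_Collect_eq)
  then show ?thesis
    unfolding mon_diff_vanish_iff_keys_in[OF assms] .
qed

lemma stresses_mono: "D \<subseteq> S \<Longrightarrow> stresses n D d v i \<subseteq> stresses n S d v i"
  unfolding stresses_def by blast

interpretation ring_module: module "(*) :: 'a::comm_ring_1 \<Rightarrow> 'a \<Rightarrow> 'a"
  by unfold_locales (simp_all add: algebra_simps)

lemma ideal_gen_eq_span: "ideal_gen G = ring_module.span G"
  unfolding ideal_gen_def ring_module.span_explicit by auto

definition AJ_generators :: "nat \<Rightarrow> nat set set \<Rightarrow> nat \<Rightarrow> (nat \<Rightarrow> nat \<Rightarrow> real) \<Rightarrow> rpoly set" where
  "AJ_generators n K d v =
    {monom \<beta> |\<beta>. Poly_Mapping.keys \<beta> \<subseteq> {1..n} \<and> Poly_Mapping.keys \<beta> \<notin> K} \<union> {theta n v j |j. j \<in> {1..d}}"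

lemma AJ_eq_span: "AJ n K d v = ring_module.span (AJ_generators n K d v)"
  unfolding AJ_def AJ_generators_def ideal_gen_eq_span ..

lemma mult_mem_AJ: "q \<in> AJ n K d v \<Longrightarrow> r * q \<in> AJ n K d v"
  unfolding AJ_eq_span by (rule ring_module.span_scale)

lemma subspace_AJ: "subspace (AJ n K d v)"
  unfolding subspace_def
  using mult_mem_AJ[of _ n K d v "Poly_Mapping.single 0 _"]
  by (simp add: AJ_eq_span ring_module.span_zero ring_module.span_add scaleR_eq_single_0_mult)

lemma monom_mem_AJ:
  "Poly_Mapping.keys \<alpha> \<subseteq> {1..n} \<Longrightarrow> Poly_Mapping.keys \<alpha> \<notin> K \<Longrightarrow> monom \<alpha> \<in> AJ n K d v"
  unfolding AJ_eq_span AJ_generators_def by (rule ring_module.span_base) blast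

lemma theta_mem_AJ: "j \<in> {1..d} \<Longrightarrow> theta n v j \<in> AJ n K d v"
  unfolding AJ_eq_span AJ_generators_def by (rule ring_module.span_base) blast

lemma apolar_mult_AJ_generator_eq_0:
  assumes K: "simplicial_complex n K" and p: "p \<in> stresses n K d v i"
    and g: "g \<in> AJ_generators n K d v"
  shows "apolar n i (c * g) p = 0"
proof -
  have p_homog: "p \<in> homog n i"
    and support: "\<forall>\<alpha>\<in>Poly_Mapping.keys p. Poly_Mapping.keys \<alpha> \<in> K"
    and stress: "\<forall>j\<in>{1..d}. dir_deriv n (\<lambda>r. v r j) p = 0"
    using p unfolding stresses_iff[OF K] by blast+
  have monom_gen: "apolar n i (monom \<gamma> * g) p = 0" for \<gamma>
  proof (cases "g \<in> {theta n v j |j. j \<in> {1..d}}")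
    case True
    then obtain j where "j \<in> {1..d}" "g = theta n v j"
      by blast
    then show ?thesis
      using apolar_lin_form_mult_monom[OF p_homog, of "\<lambda>r. v r j" \<gamma>] stress
      by (simp add: theta_eq_lin_form mult.commute)
  next
    case False
    then obtain \<beta> where \<beta>: "g = monom \<beta>" "Poly_Mapping.keys \<beta> \<notin> K"
      using g unfolding AJ_generators_def by blast
    have "Poly_Mapping.lookup p (\<gamma> + \<beta>) = 0"
    proof (rule ccontr)
      assume "Poly_Mapping.lookup p (\<gamma> + \<beta>) \<noteq> 0"
      then have "Poly_Mapping.keys (\<gamma> + \<beta>) \<in> K"
        using support by (simp add: in_keys_iff)
      then show False
        using \<beta>(2) simplicial_complex_subset[OF K] by (simp add: keys_add_mon)
    qed
    then show ?thesis
      by (simp add: \<beta>(1) monom_mult apolar_monom)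
  qed
  have "c * g = (\<Sum>\<gamma>\<in>Poly_Mapping.keys c. Poly_Mapping.lookup c \<gamma> *\<^sub>R (monom \<gamma> * g))"
    by (subst (1) sum_monom_expansion[of c, symmetric]) (simp add: sum_distrib_right mult_scaleR_left)
  then show ?thesis
    using monom_gen by (simp add: apolar_sum_left apolar_scaleR_left)
qed

lemma apolar_AJ_stresses_eq_0:
  assumes "simplicial_complex n K" "p \<in> stresses n K d v i" "q \<in> AJ n K d v"
  shows "apolar n i q p = 0"
proof -
  obtain F c where "F \<subseteq> AJ_generators n K d v" "q = (\<Sum>g\<in>F. c g * g)"
    using assms(3) unfolding AJ_eq_span ring_module.span_explicit by blast
  then show ?thesis
    using apolar_mult_AJ_generator_eq_0[OF assms(1,2)] by (simp add: apolar_sum_left subset_iff)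
qed

lemma orth_compl_subset_stresses:
  assumes K: "simplicial_complex n K"
  shows "orth_compl (apolar n i) (homog n i) (AJ n K d v \<inter> homog n i) \<subseteq> stresses n K d v i"
proof
  fix p assume "p \<in> orth_compl (apolar n i) (homog n i) (AJ n K d v \<inter> homog n i)"
  then have p_homog: "p \<in> homog n i"
    and orth: "\<And>q. q \<in> AJ n K d v \<Longrightarrow> q \<in> homog n i \<Longrightarrow> apolar n i q p = 0"
    unfolding orth_compl_def by blast+
  have "Poly_Mapping.keys \<alpha> \<in> K" if "\<alpha> \<in> Poly_Mapping.keys p" for \<alpha>
  proof (rule ccontr)
    assume "Poly_Mapping.keys \<alpha> \<notin> K"
    moreover have "\<alpha> \<in> monoms n i"
      using that p_homog by (auto simp: homog_iff_keys)
    ultimately have "apolar n i (monom \<alpha>) p = 0"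
      by (intro orth monom_mem_AJ monom_in_homog) (auto simp: monoms_def)
    then show False
      using that \<open>\<alpha> \<in> monoms n i\<close> mon_fact_pos[of \<alpha>] by (simp add: apolar_monom in_keys_iff)
  qed
  moreover have "dir_deriv n (\<lambda>r. v r j) p = 0" if j: "j \<in> {1..d}" for j
  proof (rule poly_mapping_eqI, rule ccontr)
    fix \<gamma> assume nonzero: "Poly_Mapping.lookup (dir_deriv n (\<lambda>r. v r j) p) \<gamma> \<noteq> Poly_Mapping.lookup 0 \<gamma>"
    then obtain i' where i': "i = Suc i'" "\<gamma> \<in> monoms n i'"
      using lookup_dir_deriv_neq_0[OF p_homog] by auto
    have "lin_form n (\<lambda>r. v r j) * monom \<gamma> \<in> AJ n K d v"
      using mult_mem_AJ[OF theta_mem_AJ[OF j]] by (simp add: theta_eq_lin_form mult.commute)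
    moreover have "lin_form n (\<lambda>r. v r j) * monom \<gamma> \<in> homog n i"
      using lin_form_mult_homog[OF monom_in_homog[OF i'(2)]] i'(1) by simp
    ultimately have "mon_fact \<gamma> * Poly_Mapping.lookup (dir_deriv n (\<lambda>r. v r j) p) \<gamma> = 0"
      using orth apolar_lin_form_mult_monom[OF p_homog] by metis
    then show False
      using nonzero mon_fact_pos[of \<gamma>] by simp
  qed
  ultimately show "p \<in> stresses n K d v i"
    unfolding stresses_iff[OF K] using p_homog by blast
qed

lemma stresses_eq_orth_compl:
  assumes K: "simplicial_complex n K"
  shows "stresses n K d v i = orth_compl (apolar n i) (homog n i) (AJ n K d v \<inter> homog n i)"
proof
  show "stresses n K d v i \<subseteq> orth_compl (apolar n i) (homog n i) (AJ n K d v \<inter> homog n i)"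
  proof
    fix p assume "p \<in> stresses n K d v i"
    then show "p \<in> orth_compl (apolar n i) (homog n i) (AJ n K d v \<inter> homog n i)"
      using apolar_AJ_stresses_eq_0[OF K] stresses_iff[OF K] unfolding orth_compl_def by blast
  qed
  show "orth_compl (apolar n i) (homog n i) (AJ n K d v \<inter> homog n i) \<subseteq> stresses n K d v i"
    by (rule orth_compl_subset_stresses[OF K])
qed

lemma subspace_stresses: "simplicial_complex n K \<Longrightarrow> subspace (stresses n K d v i)"
  unfolding stresses_eq_orth_compl by (intro subspace_orth_compl bilinear_apolar subspace_homog)

lemma finite_dim_stresses: "finite_dim (stresses n K d v i)"
  by (rule finite_dim_subset[OF finite_dim_homog]) (auto simp: stresses_def)

lemma dir_deriv_stresses_subset:
  assumes "simplicial_complex n K"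
  shows "dir_deriv n w ` stresses n K d v (Suc i) \<subseteq> stresses n K d v i"
  unfolding stresses_eq_orth_compl[OF assms]
  by (rule adjoint_image_orth_compl_subset[where M = "(*) (lin_form n w)"])
    (auto simp: apolar_dir_deriv dir_deriv_homog lin_form_mult_homog mult_mem_AJ)

lemma dir_deriv_stresses_onto:
  assumes "simplicial_complex n K"
    and "\<forall>p\<in>homog n i. lin_form n w * p \<in> AJ n K d v \<longrightarrow> p \<in> AJ n K d v"
  shows "dir_deriv n w ` stresses n K d v (Suc i) = stresses n K d v i"
  unfolding stresses_eq_orth_compl[OF assms(1)]
  by (rule adjoint_image_orth_compl[OF positive_definite_apolar positive_definite_apolar,
        where M = "(*) (lin_form n w)"])
    (use assms(2) in \<open>auto simp: apolar_dir_deriv dir_deriv_homog lin_form_mult_homog mult_mem_AJ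
      linear_dir_deriv subspace_AJ subspace_homog intro: real_vector.subspace_inter\<close>)

theorem mainTheorem8:
  fixes n k :: nat and S D :: "nat set set" and v :: "nat \<Rightarrow> nat \<Rightarrow> real"
  assumes "rational_sphere n k S"
    and "is_lsop n S (2*k+1) v"
    and "hard_lefschetz n S (2*k+1) v"
    and "simplicial_complex n D" and "D \<subseteq> S"
  shows "kappa n S D (2*k+1) v k \<le> kappa n S D (2*k+1) v (k+1)"
proof -
  let ?d = "2 * k + 1"
  have S: "simplicial_complex n S"
    using assms(1) unfolding rational_sphere_def homology_manifold_def by blast
  obtain l where l: "l \<in> homog n 1"
    and lefschetz: "\<forall>j. 2 * j \<le> ?d \<longrightarrow>
      (\<forall>p\<in>homog n j. l ^ (?d - 2 * j) * p \<in> AJ n S ?d v \<longrightarrow> p \<in> AJ n S ?d v)"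
    using assms(3) unfolding hard_lefschetz_def by blast
  define w where "w r = Poly_Mapping.lookup l (unit_mon r)" for r
  have "l = lin_form n w"
    unfolding w_def by (rule homog_1_eq_lin_form[OF l])
  then have "\<forall>p\<in>homog n k. lin_form n w * p \<in> AJ n S ?d v \<longrightarrow> p \<in> AJ n S ?d v"
    using lefschetz[rule_format, of k] by simp
  then have onto: "dir_deriv n w ` stresses n S ?d v (Suc k) = stresses n S ?d v k"
    by (rule dir_deriv_stresses_onto[OF S])
  have into: "dir_deriv n w ` stresses n D ?d v (Suc k) \<subseteq> stresses n D ?d v k"
    by (rule dir_deriv_stresses_subset[OF assms(4)])
  have "dim (stresses n S ?d v k) - dim (stresses n D ?d v k)
      \<le> dim (stresses n S ?d v (Suc k)) - dim (stresses n D ?d v (Suc k))"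
    by (rule dim_diff_le_of_linear_onto[OF linear_dir_deriv finite_dim_stresses
          subspace_stresses[OF S] subspace_stresses[OF assms(4)] stresses_mono[OF assms(5)]
          onto into stresses_mono[OF assms(5)]])
  then show ?thesis
    unfolding kappa_def by simp
qed

end
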